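(* Let $n>m\ge 0$ be integers. Let $(\mathbf{p})(t)$ be a disk rational Bézier curve of degree $n$ with control disks $(\mathbf{p}_i)=(x_i,y_i)_{r_i}$ (centers $\mathbf{p}_i\in\mathbb{R}^2$, radii $r_i\ge 0$) and weights $\omega_i>0$, $i=0,\dots,n$, and let $(\check{\mathbf{p}})(t)$ be a disk rational Bézier curve of degree $m$ with control disks $(\check{\mathbf{p}}_j)=(\check x_j,\check y_j)_{\check r_j}$ and weights $\check\omega_j>0$, $j=0,\dots,m$. Then $(\mathbf{p})(t)=(\check{\mathbf{p}})(t)$ for all $t\in[0,1]$ (i.e. the center curves coincide and the radius functions coincide on $[0,1]$) if and only if $$\sum_{j=\max(0,i-n)}^{\min(m,i)}\frac{\binom{m}{j}\binom{n}{i-j}}{\binom{m+n}{i}}\check\omega_j\,\omega_{i-j}\,\mathbf{p}_{i-j}=\sum_{j=\max(0,i-n)}^{\min(m,i)}\frac{\binom{m}{j}\binom{n}{i-j}}{\binom{m+n}{i}}\check\omega_j\,\omega_{i-j}\,\check{\mathbf{p}}_{j},\qquad i=0,1,\dots,n+m,$$ and $$r_k=\sum_{j=\max(0,k-n+m)}^{\min(m,k)}\check r_j\binom{m}{j}\frac{\binom{n-m}{k-j}}{\binom{n}{k}},\qquad k=0,1,\dots,n.$$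
   Context: Let $B_i^n(t)=\binom{n}{i}t^i(1-t)^{n-i}$ denote the Bernstein polynomials. A disk rational Bézier curve of degree $n$ with control disks $(\mathbf{p}_i)$ having centers $\mathbf{p}_i\in\mathbb{R}^2$ and radii $r_i\ge0$, and weights $\omega_i>0$, $i=0,\dots,n$, is the family of disks $(\mathbf{p})(t)=[\mathbf{p}(t);r(t)]$, $0\le t\le 1$, with center curve $\mathbf{p}(t)=\dfrac{\sum_{i=0}^n \mathbf{p}_i\omega_iB_i^n(t)}{\sum_{i=0}^n\omega_iB_i^n(t)}$ and (polynomial, non-rational) radius function $r(t)=\sum_{i=0}^n r_iB_i^n(t)$; i.e. $(\mathbf{p})(t)$ is the closed disk of center $\mathbf{p}(t)$ and radius $r(t)$. *)

theory Defs
  imports "HOL-Analysis.Analysis"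
begin

definition rbezier_center :: "nat \<Rightarrow> (nat \<Rightarrow> real) \<Rightarrow> (nat \<Rightarrow> real^2) \<Rightarrow> real \<Rightarrow> real^2" where
  "rbezier_center n w p t =
     (\<Sum>i\<le>n. (w i * Bernstein n i t) *\<^sub>R p i) /\<^sub>R (\<Sum>i\<le>n. w i * Bernstein n i t)"

definition bezier_radius :: "nat \<Rightarrow> (nat \<Rightarrow> real) \<Rightarrow> real \<Rightarrow> real" where
  "bezier_radius n r t = (\<Sum>i\<le>n. r i * Bernstein n i t)"

definition disk_rbezier :: "nat \<Rightarrow> (nat \<Rightarrow> real) \<Rightarrow> (nat \<Rightarrow> real^2) \<Rightarrow> (nat \<Rightarrow> real) \<Rightarrow> real \<Rightarrow> (real^2) set" where
  "disk_rbezier n w p r t = cball (rbezier_center n w p t) (bezier_radius n r t)"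

end

theory Submission
  imports Defs
begin

text \<open>Bernstein polynomials of degree \<open>N\<close> are linearly independent on \<open>[0,1]\<close>, so two
  Bernstein sums of the same degree agree on \<open>[0,1]\<close> iff their coefficients agree.
  The product of Bernstein polynomials of degrees \<open>m\<close> and \<open>n\<close> is a multiple of one of degree
  \<open>m + n\<close>. Clearing the (positive) denominators of the two center curves therefore turns
  their equality into an equality of two Bernstein sums of degree \<open>m + n\<close>; multiplying the
  radius of degree \<open>m\<close> by \<open>1 = \<Sum>l\<le>n-m. Bernstein (n-m) l t\<close> elevates it to degree \<open>n\<close>.
  Comparing coefficients gives both conditions, and two disks of nonnegative radius are
  equal iff their centers and radii are.\<close>

lemma Bernstein_mult:
  assumes "j \<le> m" "l \<le> n"
  shows "Bernstein m j t * Bernstein n l t =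
     real (m choose j) * real (n choose l) / real ((m + n) choose (j + l)) * Bernstein (m + n) (j + l) t"
proof -
  have pos: "real ((m + n) choose (j + l)) > 0" using assms by simp
  have exponent: "m + n - (j + l) = (m - j) + (n - l)" using assms by simp
  show ?thesis using pos unfolding Bernstein_def exponent by (simp add: power_add field_simps)
qed

lemma Bernstein_at_ratio:
  assumes "s \<ge> 0" "i \<le> N"
  shows "Bernstein N i (s / (1 + s)) = real (N choose i) * s ^ i / (1 + s) ^ N"
proof -
  have complement: "1 - s / (1 + s) = 1 / (1 + s)" using assms by (simp add: field_simps)
  have "(1 + s) ^ N = (1 + s) ^ i * (1 + s) ^ (N - i)"
    using assms by (simp flip: power_add)
  then show ?thesis unfolding Bernstein_def complement using assms
    by (simp add: field_simps)
qed

text \<open>Under \<open>t = s / (1 + s)\<close>, \<open>s \<ge> 0\<close>, a Bernstein sum becomes a polynomial in \<open>s\<close> divided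
  by \<open>(1 + s) ^ N\<close>, so its vanishing on \<open>[0,1]\<close> gives a polynomial with infinitely many roots.\<close>

lemma Bernstein_sum_eq_0_imp_coeff_eq_0:
  fixes c :: "nat \<Rightarrow> real"
  assumes "\<forall>t\<in>{0..1}. (\<Sum>i\<le>N. c i * Bernstein N i t) = 0" and "i \<le> N"
  shows "c i = 0"
proof -
  define d where "d i = c i * real (N choose i)" for i
  have "{0::real..} \<subseteq> {s. (\<Sum>i\<le>N. d i * s ^ i) = 0}"
  proof
    fix s :: real
    assume "s \<in> {0..}"
    then have s: "s \<ge> 0" and "s / (1 + s) \<in> {0..1}" by simp_all
    moreover have "(\<Sum>i\<le>N. c i * Bernstein N i (s / (1 + s))) = (\<Sum>i\<le>N. d i * s ^ i) / (1 + s) ^ N"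
      unfolding sum_divide_distrib by (rule sum.cong) (auto simp: Bernstein_at_ratio s d_def)
    ultimately show "s \<in> {s. (\<Sum>i\<le>N. d i * s ^ i) = 0}" using assms(1) by auto
  qed
  then have "infinite {s. (\<Sum>i\<le>N. d i * s ^ i) = 0}"
    using infinite_Ici finite_subset by blast
  then show ?thesis using polyfun_finite_roots assms(2) by (fastforce simp: d_def)
qed

lemma Bernstein_sum_eq_iff:
  fixes a b :: "nat \<Rightarrow> 'a::euclidean_space"
  shows "(\<forall>t\<in>{0..1}. (\<Sum>i\<le>N. Bernstein N i t *\<^sub>R a i) = (\<Sum>i\<le>N. Bernstein N i t *\<^sub>R b i))
     \<longleftrightarrow> (\<forall>i\<le>N. a i = b i)"
proof
  assume eq: "\<forall>t\<in>{0..1}. (\<Sum>i\<le>N. Bernstein N i t *\<^sub>R a i) = (\<Sum>i\<le>N. Bernstein N i t *\<^sub>R b i)"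
  have "(a i - b i) \<bullet> u = 0" if "i \<le> N" for i u
  proof (rule Bernstein_sum_eq_0_imp_coeff_eq_0[OF _ that])
    show "\<forall>t\<in>{0..1}. (\<Sum>i\<le>N. (a i - b i) \<bullet> u * Bernstein N i t) = 0"
    proof
      fix t :: real
      assume "t \<in> {0..1}"
      then have "(\<Sum>i\<le>N. Bernstein N i t *\<^sub>R (a i - b i)) \<bullet> u = 0"
        using eq by (simp add: scaleR_diff_right sum_subtractf)
      then show "(\<Sum>i\<le>N. (a i - b i) \<bullet> u * Bernstein N i t) = 0"
        by (simp add: inner_sum_left mult.commute)
    qed
  qed
  then show "\<forall>i\<le>N. a i = b i"
    by (metis euclidean_eq_iff inner_diff_left right_minus_eq)
qed simp

lemma sum_atMost_atMost_antidiagonal: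
  fixes f :: "nat \<Rightarrow> nat \<Rightarrow> 'a::comm_monoid_add"
  shows "(\<Sum>i\<le>n. \<Sum>j\<le>m. f i j) = (\<Sum>k\<le>n + m. \<Sum>j=k - n..min m k. f (k - j) j)"
proof -
  have "(\<Sum>i\<le>n. \<Sum>j\<le>m. f i j) = (\<Sum>(i, j)\<in>{..n} \<times> {..m}. f i j)"
    by (simp add: sum.cartesian_product)
  also have "\<dots> = (\<Sum>(k, j)\<in>(SIGMA k:{..n + m}. {k - n..min m k}). f (k - j) j)"
    by (rule sum.reindex_bij_witness[where i="\<lambda>(k, j). (k - j, j)" and j="\<lambda>(i, j). (i + j, j)"]) auto
  also have "\<dots> = (\<Sum>k\<le>n + m. \<Sum>j=k - n..min m k. f (k - j) j)"
    by (simp add: sum.Sigma)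
  finally show ?thesis .
qed

lemma Bernstein_product_sum:
  fixes f :: "nat \<Rightarrow> nat \<Rightarrow> 'a::real_vector"
  shows "(\<Sum>i\<le>n. \<Sum>j\<le>m. (Bernstein m j t * Bernstein n i t) *\<^sub>R f i j) =
    (\<Sum>k\<le>m + n. Bernstein (m + n) k t *\<^sub>R (\<Sum>j=k - n..min m k.
        (real (m choose j) * real (n choose (k - j)) / real ((m + n) choose k)) *\<^sub>R f (k - j) j))"
proof -
  have "(\<Sum>i\<le>n. \<Sum>j\<le>m. (Bernstein m j t * Bernstein n i t) *\<^sub>R f i j) =
    (\<Sum>i\<le>n. \<Sum>j\<le>m. (Bernstein (m + n) (j + i) t *
        (real (m choose j) * real (n choose i) / real ((m + n) choose (j + i)))) *\<^sub>R f i j)"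
    by (intro sum.cong refl) (simp add: Bernstein_mult)
  also have "\<dots> = (\<Sum>k\<le>n + m. \<Sum>j=k - n..min m k. (Bernstein (m + n) k t *
        (real (m choose j) * real (n choose (k - j)) / real ((m + n) choose k))) *\<^sub>R f (k - j) j)"
    by (subst sum_atMost_atMost_antidiagonal) (intro sum.cong refl, simp)
  also have "\<dots> = (\<Sum>k\<le>m + n. Bernstein (m + n) k t *\<^sub>R (\<Sum>j=k - n..min m k.
        (real (m choose j) * real (n choose (k - j)) / real ((m + n) choose k)) *\<^sub>R f (k - j) j))"
    by (simp only: scaleR_sum_right scaleR_scaleR add.commute[of n m])
  finally show ?thesis .
qed

lemma Bernstein_degree_elevation:
  fixes a :: "nat \<Rightarrow> 'a::real_vector"
  assumes "m \<le> n"
  shows "(\<Sum>j\<le>m. Bernstein m j t *\<^sub>R a j) =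
    (\<Sum>k\<le>n. Bernstein n k t *\<^sub>R (\<Sum>j=k + m - n..min m k.
        (real (m choose j) * real ((n - m) choose (k - j)) / real (n choose k)) *\<^sub>R a j))"
proof -
  have deg: "m + (n - m) = n" and shift: "\<And>k. k - (n - m) = k + m - n"
    using assms by auto
  have "(\<Sum>j\<le>m. Bernstein m j t *\<^sub>R a j) =
      (\<Sum>j\<le>m. (Bernstein m j t * (\<Sum>l\<le>n - m. Bernstein (n - m) l t)) *\<^sub>R a j)"
    by simp
  also have "\<dots> = (\<Sum>j\<le>m. \<Sum>l\<le>n - m. (Bernstein m j t * Bernstein (n - m) l t) *\<^sub>R a j)"
    by (simp only: sum_distrib_left scaleR_sum_left)
  also have "\<dots> = (\<Sum>l\<le>n - m. \<Sum>j\<le>m. (Bernstein m j t * Bernstein (n - m) l t) *\<^sub>R a j)"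
    by (rule sum.swap)
  also have "\<dots> = (\<Sum>k\<le>m + (n - m). Bernstein (m + (n - m)) k t *\<^sub>R (\<Sum>j=k - (n - m)..min m k.
        (real (m choose j) * real ((n - m) choose (k - j)) / real ((m + (n - m)) choose k)) *\<^sub>R a j))"
    by (rule Bernstein_product_sum)
  finally show ?thesis unfolding deg shift .
qed

lemma Bernstein_weighted_sum_pos:
  assumes "\<forall>i\<le>n. w i > 0" "t \<in> {0..1}"
  shows "(\<Sum>i\<le>n. w i * Bernstein n i t) > 0"
proof -
  have nonneg: "\<forall>i\<in>{..n}. 0 \<le> w i * Bernstein n i t"
    using assms by (auto intro!: mult_nonneg_nonneg Bernstein_nonneg simp: less_imp_le)
  consider "t = 1" | "t < 1" using assms(2) by fastforce
  then show ?thesis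
  proof cases
    case 1
    then have "0 < w n * Bernstein n n t" using assms(1) by (simp add: Bernstein_def)
    then show ?thesis using nonneg by (intro sum_pos2[of "{..n}" n]) auto
  next
    case 2
    then have "0 < w 0 * Bernstein n 0 t" using assms(1) by (simp add: Bernstein_def)
    then show ?thesis using nonneg by (intro sum_pos2[of "{..n}" 0]) auto
  qed
qed

lemma divideR_eq_divideR_iff:
  fixes x y :: "'a::real_vector"
  assumes "a \<noteq> 0" "b \<noteq> 0"
  shows "x /\<^sub>R a = y /\<^sub>R b \<longleftrightarrow> b *\<^sub>R x = a *\<^sub>R y"
proof -
  have "(a * b) *\<^sub>R (x /\<^sub>R a) = b *\<^sub>R x" and "(a * b) *\<^sub>R (y /\<^sub>R b) = a *\<^sub>R y"
    using assms by (simp_all add: mult.commute mult.left_commute)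
  then show ?thesis using assms by (metis mult_eq_0_iff scaleR_cancel_left)
qed

lemma rbezier_center_eq_iff:
  assumes "\<forall>i\<le>n. w i > 0" and "\<forall>j\<le>m. wc j > 0"
  shows "(\<forall>t\<in>{0..1}. rbezier_center n w p t = rbezier_center m wc pc t) \<longleftrightarrow>
     (\<forall>i\<le>n + m.
        (\<Sum>j=i - n..min m i. (real (m choose j) * real (n choose (i - j)) / real ((m + n) choose i)
            * wc j * w (i - j)) *\<^sub>R p (i - j)) =
        (\<Sum>j=i - n..min m i. (real (m choose j) * real (n choose (i - j)) / real ((m + n) choose i)
            * wc j * w (i - j)) *\<^sub>R pc j))"
    (is "_ \<longleftrightarrow> (\<forall>i\<le>n + m. ?P i = ?Q i)")
proof -
  have product: "(\<Sum>i\<le>n. \<Sum>j\<le>m. (wc j * Bernstein m j t * (w i * Bernstein n i t)) *\<^sub>R f i j) =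
      (\<Sum>k\<le>m + n. Bernstein (m + n) k t *\<^sub>R (\<Sum>j=k - n..min m k.
        (real (m choose j) * real (n choose (k - j)) / real ((m + n) choose k)
          * wc j * w (k - j)) *\<^sub>R f (k - j) j))"
    for t and f :: "nat \<Rightarrow> nat \<Rightarrow> real^2"
  proof -
    have "(\<Sum>i\<le>n. \<Sum>j\<le>m. (wc j * Bernstein m j t * (w i * Bernstein n i t)) *\<^sub>R f i j) =
        (\<Sum>i\<le>n. \<Sum>j\<le>m. (Bernstein m j t * Bernstein n i t) *\<^sub>R ((wc j * w i) *\<^sub>R f i j))"
      by (simp add: mult_ac)
    also have "\<dots> = (\<Sum>k\<le>m + n. Bernstein (m + n) k t *\<^sub>R (\<Sum>j=k - n..min m k.
        (real (m choose j) * real (n choose (k - j)) / real ((m + n) choose k)) *\<^sub>R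
          ((wc j * w (k - j)) *\<^sub>R f (k - j) j)))"
      by (rule Bernstein_product_sum)
    finally show ?thesis by (simp only: scaleR_scaleR mult.assoc)
  qed
  have "rbezier_center n w p t = rbezier_center m wc pc t \<longleftrightarrow>
      (\<Sum>k\<le>m + n. Bernstein (m + n) k t *\<^sub>R ?P k) = (\<Sum>k\<le>m + n. Bernstein (m + n) k t *\<^sub>R ?Q k)"
    if "t \<in> {0..1}" for t
  proof -
    have "(\<Sum>i\<le>n. w i * Bernstein n i t) \<noteq> 0" "(\<Sum>j\<le>m. wc j * Bernstein m j t) \<noteq> 0"
      using Bernstein_weighted_sum_pos assms that by (metis less_irrefl)+
    then have "rbezier_center n w p t = rbezier_center m wc pc t \<longleftrightarrow>
        (\<Sum>j\<le>m. wc j * Bernstein m j t) *\<^sub>R (\<Sum>i\<le>n. (w i * Bernstein n i t) *\<^sub>R p i) =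
        (\<Sum>i\<le>n. w i * Bernstein n i t) *\<^sub>R (\<Sum>j\<le>m. (wc j * Bernstein m j t) *\<^sub>R pc j)"
      unfolding rbezier_center_def by (rule divideR_eq_divideR_iff)
    also have "(\<Sum>j\<le>m. wc j * Bernstein m j t) *\<^sub>R (\<Sum>i\<le>n. (w i * Bernstein n i t) *\<^sub>R p i) =
        (\<Sum>i\<le>n. \<Sum>j\<le>m. (wc j * Bernstein m j t * (w i * Bernstein n i t)) *\<^sub>R p i)"
      by (simp add: scaleR_sum_right sum_distrib_right scaleR_sum_left)
    also have "(\<Sum>i\<le>n. w i * Bernstein n i t) *\<^sub>R (\<Sum>j\<le>m. (wc j * Bernstein m j t) *\<^sub>R pc j) =
        (\<Sum>i\<le>n. \<Sum>j\<le>m. (wc j * Bernstein m j t * (w i * Bernstein n i t)) *\<^sub>R pc j)"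
      by (subst sum.swap) (simp add: scaleR_sum_right sum_distrib_left scaleR_sum_left mult.commute)
    finally show ?thesis by (simp only: product)
  qed
  then show ?thesis
    using Bernstein_sum_eq_iff[of "m + n" ?P ?Q] by (simp add: add.commute)
qed

lemma bezier_radius_eq_iff:
  assumes "m \<le> n"
  shows "(\<forall>t\<in>{0..1}. bezier_radius n r t = bezier_radius m rc t) \<longleftrightarrow>
    (\<forall>k\<le>n. r k = (\<Sum>j=k + m - n..min m k.
            rc j * real (m choose j) * real ((n - m) choose (k - j)) / real (n choose k)))"
    (is "_ \<longleftrightarrow> (\<forall>k\<le>n. r k = ?R k)")
proof -
  have "bezier_radius m rc t = (\<Sum>j\<le>m. Bernstein m j t *\<^sub>R rc j)" for t
    by (simp add: bezier_radius_def mult.commute)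
  also have "\<dots> t = (\<Sum>k\<le>n. Bernstein n k t *\<^sub>R (\<Sum>j=k + m - n..min m k.
        (real (m choose j) * real ((n - m) choose (k - j)) / real (n choose k)) *\<^sub>R rc j))" for t
    by (rule Bernstein_degree_elevation[OF assms])
  also have "\<dots> t = (\<Sum>k\<le>n. Bernstein n k t *\<^sub>R ?R k)" for t
    by (simp add: sum_divide_distrib mult_ac)
  finally have "bezier_radius m rc t = (\<Sum>k\<le>n. Bernstein n k t *\<^sub>R ?R k)" for t .
  moreover have "bezier_radius n r t = (\<Sum>k\<le>n. Bernstein n k t *\<^sub>R r k)" for t
    by (simp add: bezier_radius_def mult.commute)
  ultimately show ?thesis using Bernstein_sum_eq_iff[of n r ?R] by simp
qed

lemma disk_rbezier_eq_iff:
  assumes "\<forall>i\<le>n. r i \<ge> 0" "t \<in> {0..1}"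
  shows "disk_rbezier n w p r t = disk_rbezier m wc pc rc t \<longleftrightarrow>
    rbezier_center n w p t = rbezier_center m wc pc t \<and> bezier_radius n r t = bezier_radius m rc t"
proof -
  have "bezier_radius n r t \<ge> 0"
    unfolding bezier_radius_def using assms
    by (auto intro!: sum_nonneg mult_nonneg_nonneg Bernstein_nonneg)
  then show ?thesis unfolding disk_rbezier_def cball_eq_cball_iff by auto
qed

theorem mainTheorem1:
  fixes n m :: nat
    and p :: "nat \<Rightarrow> real^2" and r w :: "nat \<Rightarrow> real"
    and pc :: "nat \<Rightarrow> real^2" and rc wc :: "nat \<Rightarrow> real"
  assumes "m < n"
    and "\<forall>i\<le>n. w i > 0" and "\<forall>i\<le>n. r i \<ge> 0"
    and "\<forall>j\<le>m. wc j > 0" and "\<forall>j\<le>m. rc j \<ge> 0"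
  shows "(\<forall>t\<in>{0..1}. disk_rbezier n w p r t = disk_rbezier m wc pc rc t) \<longleftrightarrow>
     ((\<forall>i\<le>n + m.
        (\<Sum>j=i - n..min m i. (real (m choose j) * real (n choose (i - j)) / real ((m + n) choose i)
            * wc j * w (i - j)) *\<^sub>R p (i - j)) =
        (\<Sum>j=i - n..min m i. (real (m choose j) * real (n choose (i - j)) / real ((m + n) choose i)
            * wc j * w (i - j)) *\<^sub>R pc j)) \<and>
      (\<forall>k\<le>n. r k = (\<Sum>j=k + m - n..min m k.
            rc j * real (m choose j) * real ((n - m) choose (k - j)) / real (n choose k))))"
proof -
  have "(\<forall>t\<in>{0..1}. disk_rbezier n w p r t = disk_rbezier m wc pc rc t) \<longleftrightarrow>
     (\<forall>t\<in>{0..1}. rbezier_center n w p t = rbezier_center m wc pc t) \<and>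
     (\<forall>t\<in>{0..1}. bezier_radius n r t = bezier_radius m rc t)"
    using disk_rbezier_eq_iff[OF assms(3)] by blast
  then show ?thesis
    using rbezier_center_eq_iff[OF assms(2,4)] bezier_radius_eq_iff[of m n] assms(1) by simp
qed

end
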